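(* Let $n\ge2$, $t>0$ and $\bm{N}=(t,0,\ldots,0,-t)\in\mathbb{R}^{n+1}$. Then the uniform average of the vertices of $\mathcal{F}_n(\bm{N})$ is the flow $\bm{f}$ given by \[ f_{0,n}=t\,2^{-(n-1)},\quad f_{0,k}=t\,2^{-k}\ (1\le k\le n-1),\quad f_{i,n}=t\,2^{-(n-i)}\ (1\le i\le n-1),\quad f_{i,k}=t\,2^{-(k-i+1)}\ (1\le i<k\le n-1). \] Equivalently, it is represented by $t$ times the $n\times n$ matrix $A=(a_{ij})_{0\le i,j\le n-1}$ with $a_{00}=2^{-(n-1)}$, $a_{0j}=2^{-(n-j)}$ for $j\ge1$, $a_{i0}=2^{-(n-i)}$ for $i\ge1$, $a_{ij}=2^{-(n-i-j+1)}$ for $i,j\ge1$, $i+j<n$, $a_{i,n-i}=\tfrac12$ for $1\le i\le n-1$, and $a_{ij}=0$ for $i+j>n$.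
   Context: $\mathcal{F}_n(\bm{N})$ is the polytope of $\bm{f}=(f_{ij})_{0\le i<j\le n}\in\mathbb{R}_{\ge0}^{\binom{n+1}{2}}$ with $\sum_{j>i} f_{ij}-\sum_{k<i} f_{ki}=N_i$ for every $i\in\{0,\ldots,n\}$. The matrix form of $\bm f$ is $(a_{ij})$ with $a_{ij}=f_{i,n-j}$ for $i+j\le n-1$, $a_{i,n-i}=\sum_{k<i}(N_k-f_{k,i})$ for $1\le i\le n-1$, zero otherwise. The uniform average of vertices is the arithmetic mean of the vertices. *)

theory Defs
  imports Complex_Main
begin

text \<open>A flow f = (f_ij) for 0 \<le> i < j \<le> n is encoded as a function
  nat \<Rightarrow> nat \<Rightarrow> real that vanishes outside the index set {(i,j). i < j \<and> j \<le> n}.\<close>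

definition flow_polytope :: "nat \<Rightarrow> (nat \<Rightarrow> real) \<Rightarrow> (nat \<Rightarrow> nat \<Rightarrow> real) set" where
  "flow_polytope n N = {f. (\<forall>i j. \<not> (i < j \<and> j \<le> n) \<longrightarrow> f i j = 0)
      \<and> (\<forall>i j. 0 \<le> f i j)
      \<and> (\<forall>i\<le>n. (\<Sum>j\<in>{i<..n}. f i j) - (\<Sum>k<i. f k i) = N i)}"

definition vertices :: "(nat \<Rightarrow> nat \<Rightarrow> real) set \<Rightarrow> (nat \<Rightarrow> nat \<Rightarrow> real) set" where
  "vertices P = {x \<in> P. \<not> (\<exists>a\<in>P. \<exists>b\<in>P. \<exists>u::real. 0 < u \<and> u < 1 \<and> a \<noteq> b \<and>
       x = (\<lambda>i j. u * a i j + (1 - u) * b i j))}"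

definition uniform_average :: "(nat \<Rightarrow> nat \<Rightarrow> real) set \<Rightarrow> (nat \<Rightarrow> nat \<Rightarrow> real)" where
  "uniform_average V = (\<lambda>i j. (\<Sum>v\<in>V. v i j) / real (card V))"

definition matrix_form :: "nat \<Rightarrow> (nat \<Rightarrow> real) \<Rightarrow> (nat \<Rightarrow> nat \<Rightarrow> real) \<Rightarrow> (nat \<Rightarrow> nat \<Rightarrow> real)" where
  "matrix_form n N f = (\<lambda>i j.
     if i < n \<and> j < n \<and> i + j \<le> n - 1 then f i (n - j)
     else if 1 \<le> i \<and> i \<le> n - 1 \<and> j = n - i then (\<Sum>k<i. N k - f k i)
     else 0)"

end

theory Submission
  imports Defs
begin

(* For N = (t,0,...,0,-t) the vertices of the flow polytope are exactly the flows sending t along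
   a single path 0 = s_0 < s_1 < ... < s_m = n.  Conservation lets one follow positive edges of any
   flow from 0 to n, so every flow dominates a small multiple of some path flow, and a vertex,
   being extreme, must equal it; conversely a path flow is the only flow supported on its own edges.
   Paths correspond to subsets T of the interior nodes {1,...,n-1}, so there are 2^(n-1) vertices.
   The path of T uses the edge (i,j) iff T meets {i..j} \<inter> {1..n-1} exactly in {i,j} \<inter> {1..n-1},
   which happens for the fraction 2^-|{i..j} \<inter> {1..n-1}| of all T; and an interior node lies on
   half of the paths, so the averaged inflow there is t/2, which yields the antidiagonal entries
   t - t/2 of the matrix form. *)

lemma sum_if_unique:
  assumes "finite A" "s \<in> A" "\<And>j. j \<in> A \<Longrightarrow> P j \<longleftrightarrow> j = s"
  shows "(\<Sum>j\<in>A. if P j then (c::'a::comm_monoid_add) else 0) = c"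
proof -
  have "(\<Sum>j\<in>A. if P j then c else 0) = (\<Sum>j\<in>A. if j = s then c else 0)"
    using assms by (intro sum.cong) auto
  then show ?thesis using assms by simp
qed

lemma card_Pow_Int_eq:
  assumes "finite U" "C \<subseteq> U" "A \<subseteq> C"
  shows "card {T \<in> Pow U. T \<inter> C = A} = 2 ^ card (U - C)"
proof -
  have "{T \<in> Pow U. T \<inter> C = A} = (\<lambda>R. R \<union> A) ` Pow (U - C)"
  proof (intro equalityI subsetI)
    fix T assume "T \<in> {T \<in> Pow U. T \<inter> C = A}"
    then have "T = (T - C) \<union> A" "T - C \<in> Pow (U - C)" by auto
    then show "T \<in> (\<lambda>R. R \<union> A) ` Pow (U - C)" by (rule image_eqI)
  next
    fix T assume "T \<in> (\<lambda>R. R \<union> A) ` Pow (U - C)"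
    then show "T \<in> {T \<in> Pow U. T \<inter> C = A}" using assms by auto
  qed
  moreover have "inj_on (\<lambda>R. R \<union> A) (Pow (U - C))"
    using assms by (intro inj_onI) blast
  ultimately show ?thesis using assms by (simp add: card_image card_Pow)
qed

lemma sum_Pow_if_Int_eq:
  assumes "finite U" "C \<subseteq> U" "A \<subseteq> C"
  shows "(\<Sum>T\<in>Pow U. if T \<inter> C = A then c else 0) / 2 ^ card U = (c::real) * (1/2) ^ card C"
proof -
  have U: "card U = card (U - C) + card C"
    using assms by (simp add: card_Diff_subset card_mono finite_subset)
  have "(\<Sum>T\<in>Pow U. if T \<inter> C = A then c else 0) = c * card {T \<in> Pow U. T \<inter> C = A}"
    using assms by (simp add: sum.inter_filter[symmetric])
  also have "\<dots> = c * 2 ^ card (U - C)" unfolding card_Pow_Int_eq[OF assms] by simp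
  finally show ?thesis unfolding U by (simp add: power_add power_one_over)
qed

lemma card_Icc_Int_interior:
  "card ({i..j} \<inter> {1..<n}) = Suc (min j (n - 1)) - max 1 i"
proof -
  have "{i..j} \<inter> {1..<n} = {max 1 i..min j (n - 1)}" by auto
  then show ?thesis by simp
qed

definition source_sink :: "nat \<Rightarrow> real \<Rightarrow> nat \<Rightarrow> real" where
  "source_sink n t = (\<lambda>i. if i = 0 then t else if i = n then - t else 0)"

(* A set S \<subseteq> {0..n} containing 0 and n encodes the path that visits S in increasing order. *)
definition consecutive :: "nat set \<Rightarrow> nat \<Rightarrow> nat \<Rightarrow> bool" where
  "consecutive S i j \<longleftrightarrow> i \<in> S \<and> j \<in> S \<and> i < j \<and> (\<forall>k\<in>S. \<not> (i < k \<and> k < j))"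

definition path_flow :: "real \<Rightarrow> nat set \<Rightarrow> nat \<Rightarrow> nat \<Rightarrow> real" where
  "path_flow t S i j = (if consecutive S i j then t else 0)"

lemma consecutive_unique_succ: "consecutive S i j \<Longrightarrow> consecutive S i j' \<Longrightarrow> j = j'"
  unfolding consecutive_def by (metis linorder_neqE_nat)

lemma consecutive_unique_pred: "consecutive S i j \<Longrightarrow> consecutive S i' j \<Longrightarrow> i = i'"
  unfolding consecutive_def by (metis linorder_neqE_nat)

lemma consecutive_exists_succ:
  assumes "finite S" "i \<in> S" "s \<in> S" "i < s"
  obtains j where "consecutive S i j"
proof -
  define m where "m = Min {k\<in>S. i < k}"
  have "m \<in> {k\<in>S. i < k}" unfolding m_def using assms by (intro Min_in) auto
  then have "m \<in> S" "i < m" by auto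
  moreover have "m \<le> k" if "k \<in> S" "i < k" for k using assms that unfolding m_def by simp
  ultimately have "consecutive S i m" using assms unfolding consecutive_def by (meson leD)
  then show thesis by (rule that)
qed

lemma consecutive_exists_pred:
  assumes "finite S" "i \<in> S" "s \<in> S" "s < i"
  obtains j where "consecutive S j i"
proof -
  define m where "m = Max {k\<in>S. k < i}"
  have "m \<in> {k\<in>S. k < i}" unfolding m_def using assms by (intro Max_in) auto
  then have "m \<in> S" "m < i" by auto
  moreover have "k \<le> m" if "k \<in> S" "k < i" for k using assms that unfolding m_def by simp
  ultimately have "consecutive S m i" using assms unfolding consecutive_def by (meson leD)
  then show thesis by (rule that)
qed

lemma consecutive_insert_below:
  assumes "i < j" "j \<in> S" "\<forall>k\<in>S. j \<le> k"
  shows "consecutive (insert i S) a b \<longleftrightarrow> (a = i \<and> b = j) \<or> consecutive S a b"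
proof
  assume c: "consecutive (insert i S) a b"
  show "(a = i \<and> b = j) \<or> consecutive S a b"
  proof (cases "a = i")
    case True
    then have "b \<in> S" "\<not> j < b" using c assms unfolding consecutive_def by auto
    then show ?thesis using True assms by force
  next
    case False
    then show ?thesis using c assms unfolding consecutive_def by force
  qed
next
  assume "(a = i \<and> b = j) \<or> consecutive S a b"
  then show "consecutive (insert i S) a b"
    using assms unfolding consecutive_def by force
qed

lemma consecutive_insert_0_n_iff:
  assumes "T \<subseteq> {1..<n}" "i < j" "j \<le> n"
  shows "consecutive (insert 0 (insert n T)) i j \<longleftrightarrow> T \<inter> ({i..j} \<inter> {1..<n}) = {i, j} \<inter> {1..<n}"
proof -
  have "consecutive (insert 0 (insert n T)) i j \<longleftrightarrow>
      (i = 0 \<or> i \<in> T) \<and> (j = n \<or> j \<in> T) \<and> (\<forall>k\<in>T. \<not> (i < k \<and> k < j))"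
    using assms unfolding consecutive_def by auto
  also have "\<dots> \<longleftrightarrow> T \<inter> {i..j} = {i, j} \<inter> {1..<n}"
  proof
    assume path: "(i = 0 \<or> i \<in> T) \<and> (j = n \<or> j \<in> T) \<and> (\<forall>k\<in>T. \<not> (i < k \<and> k < j))"
    show "T \<inter> {i..j} = {i, j} \<inter> {1..<n}"
    proof (intro equalityI subsetI)
      fix k assume "k \<in> T \<inter> {i..j}"
      then show "k \<in> {i, j} \<inter> {1..<n}" using path assms(1) by (auto simp: le_less)
    next
      fix k assume "k \<in> {i, j} \<inter> {1..<n}"
      then show "k \<in> T \<inter> {i..j}" using path assms(2) by auto
    qed
  next
    assume T: "T \<inter> {i..j} = {i, j} \<inter> {1..<n}"
    have mem: "k \<in> T" if "k \<in> {i, j} \<inter> {1..<n}" for k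
      using that unfolding T[symmetric] by simp
    have "i = 0 \<or> i \<in> T" using mem[of i] assms(2,3) by (cases "i = 0") auto
    moreover have "j = n \<or> j \<in> T" using mem[of j] assms(2,3) by (cases "j = n") auto
    moreover have "\<not> (i < k \<and> k < j)" if "k \<in> T" for k
    proof
      assume "i < k \<and> k < j"
      then have "k \<in> T \<inter> {i..j}" "k \<notin> {i, j}" using that by auto
      then show False using T by blast
    qed
    ultimately show "(i = 0 \<or> i \<in> T) \<and> (j = n \<or> j \<in> T) \<and> (\<forall>k\<in>T. \<not> (i < k \<and> k < j))"
      by blast
  qed
  also have "T \<inter> {i..j} = T \<inter> ({i..j} \<inter> {1..<n})" using assms(1) by auto
  finally show ?thesis .
qed

lemma path_flow_outflow:
  assumes "S \<subseteq> {..n}" "n \<in> S"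
  shows "(\<Sum>j\<in>{i<..n}. path_flow t S i j) = (if i \<in> S \<and> i < n then t else 0)"
proof (cases "i \<in> S \<and> i < n")
  case True
  then obtain s where s: "consecutive S i s"
    using assms finite_subset by (metis consecutive_exists_succ finite_atMost)
  then have "s \<in> {i<..n}" using assms unfolding consecutive_def by auto
  then show ?thesis unfolding path_flow_def using True s consecutive_unique_succ
    by (subst sum_if_unique[where s = s]) auto
next
  case False
  then show ?thesis using assms unfolding path_flow_def consecutive_def by auto
qed

lemma path_flow_inflow:
  assumes "S \<subseteq> {..n}" "0 \<in> S"
  shows "(\<Sum>k<i. path_flow t S k i) = (if i \<in> S \<and> 0 < i then t else 0)"
proof (cases "i \<in> S \<and> 0 < i")
  case True
  then obtain s where s: "consecutive S s i"
    using assms finite_subset by (metis consecutive_exists_pred finite_atMost)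
  then have "s \<in> {..<i}" unfolding consecutive_def by auto
  then show ?thesis unfolding path_flow_def using True s consecutive_unique_pred
    by (subst sum_if_unique[where s = s]) auto
next
  case False
  then show ?thesis unfolding path_flow_def consecutive_def by auto
qed

lemma path_flow_in_flow_polytope:
  assumes "1 \<le> n" "0 \<le> t" "S \<subseteq> {..n}" "0 \<in> S" "n \<in> S"
  shows "path_flow t S \<in> flow_polytope n (source_sink n t)"
  unfolding flow_polytope_def
proof (intro CollectI conjI allI impI)
  fix i j assume "\<not> (i < j \<and> j \<le> n)"
  then show "path_flow t S i j = 0" using assms unfolding path_flow_def consecutive_def by auto
next
  fix i j show "0 \<le> path_flow t S i j" using assms unfolding path_flow_def by auto
next
  fix i assume "i \<le> n"
  then show "(\<Sum>j\<in>{i<..n}. path_flow t S i j) - (\<Sum>k<i. path_flow t S k i) = source_sink n t i"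
    using assms by (simp add: path_flow_outflow path_flow_inflow source_sink_def)
qed

lemma flow_polytope_outflow_eq:
  assumes "f \<in> flow_polytope n N" "i \<le> n"
  shows "(\<Sum>j\<in>{i<..n}. f i j) = N i + (\<Sum>k<i. f k i)"
  using assms unfolding flow_polytope_def by force

(* Conservation determines the flow node by node, in increasing order. *)
lemma flow_polytope_eq_by_support:
  assumes a: "a \<in> flow_polytope n N" and p: "p \<in> flow_polytope n N"
    and supp: "\<And>i j. p i j = 0 \<Longrightarrow> a i j = 0"
    and single_out: "\<And>i j j'. p i j \<noteq> 0 \<Longrightarrow> p i j' \<noteq> 0 \<Longrightarrow> j = j'"
  shows "a = p"
proof -
  have "a i = p i" for i
  proof (induction i rule: less_induct)
    case (less i)
    show ?case
    proof (cases "i \<le> n \<and> (\<exists>j. p i j \<noteq> 0)")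
      case True
      then obtain j0 where i: "i \<le> n" and j0: "p i j0 \<noteq> 0" by blast
      have other: "j \<noteq> j0 \<Longrightarrow> p i j = 0 \<and> a i j = 0" for j using single_out j0 supp by blast
      have j0_range: "j0 \<in> {i<..n}" using j0 p unfolding flow_polytope_def by force
      have sum_single: "(\<Sum>j\<in>{i<..n}. g i j) = g i j0"
        if "\<And>j. j \<noteq> j0 \<Longrightarrow> g i j = 0" for g :: "nat \<Rightarrow> nat \<Rightarrow> real"
        using that by (subst sum.remove[OF _ j0_range]) (auto intro: sum.neutral)
      have "(\<Sum>k<i. a k i) = (\<Sum>k<i. p k i)" using less by simp
      then have "(\<Sum>j\<in>{i<..n}. a i j) = (\<Sum>j\<in>{i<..n}. p i j)"
        using flow_polytope_outflow_eq[OF a i] flow_polytope_outflow_eq[OF p i] by simp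
      then have "a i j0 = p i j0" using sum_single[of a] sum_single[of p] other by simp
      then show ?thesis using other by metis
    next
      case False
      then show ?thesis using supp a p unfolding flow_polytope_def by fastforce
    qed
  qed
  then show ?thesis by auto
qed

lemma path_flow_in_vertices:
  assumes "1 \<le> n" "0 < t" "S \<subseteq> {..n}" "0 \<in> S" "n \<in> S"
  shows "path_flow t S \<in> vertices (flow_polytope n (source_sink n t))"
proof -
  let ?P = "flow_polytope n (source_sink n t)"
  have p: "path_flow t S \<in> ?P" using assms by (intro path_flow_in_flow_polytope) auto
  have single_out: "j = j'" if "path_flow t S i j \<noteq> 0" "path_flow t S i j' \<noteq> 0" for i j j'
    using that consecutive_unique_succ unfolding path_flow_def by (auto split: if_splits)
  have "a = b" if a: "a \<in> ?P" and b: "b \<in> ?P" and u: "0 < u" "u < 1"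
    and comb: "path_flow t S = (\<lambda>i j. u * a i j + (1 - u) * b i j)" for a b u
  proof -
    have zero: "a i j = 0 \<and> b i j = 0" if "path_flow t S i j = 0" for i j
    proof -
      have "0 \<le> u * a i j" "0 \<le> (1 - u) * b i j" using a b u unfolding flow_polytope_def by auto
      moreover have "u * a i j + (1 - u) * b i j = 0" using that comb by metis
      ultimately show ?thesis using u by (simp add: add_nonneg_eq_0_iff)
    qed
    have "a = path_flow t S"
      by (rule flow_polytope_eq_by_support[OF a p]) (use zero single_out in blast)+
    moreover have "b = path_flow t S"
      by (rule flow_polytope_eq_by_support[OF b p]) (use zero single_out in blast)+
    ultimately show ?thesis by simp
  qed
  then show ?thesis using p unfolding vertices_def by blast
qed

lemma flow_polytope_residual:
  assumes f: "f \<in> flow_polytope n N" and p: "p \<in> flow_polytope n N"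
    and u: "u < 1" and le: "\<And>i j. u * p i j \<le> f i j"
  shows "(\<lambda>i j. (f i j - u * p i j) / (1 - u)) \<in> flow_polytope n N"
  unfolding flow_polytope_def
proof (intro CollectI conjI allI impI)
  fix i j assume "\<not> (i < j \<and> j \<le> n)"
  then show "(f i j - u * p i j) / (1 - u) = 0" using f p unfolding flow_polytope_def by simp
next
  fix i j show "0 \<le> (f i j - u * p i j) / (1 - u)" using le[of i j] u by simp
next
  fix i assume i: "i \<le> n"
  have div: "(\<Sum>x\<in>A. (g x - u * h x) / (1 - u)) = (sum g A - u * sum h A) / (1 - u)"
    for g h :: "nat \<Rightarrow> real" and A
    by (simp add: sum_divide_distrib[symmetric] sum_subtractf sum_distrib_left)
  have "(\<Sum>j\<in>{i<..n}. (f i j - u * p i j) / (1 - u)) - (\<Sum>k<i. (f k i - u * p k i) / (1 - u))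
      = (((\<Sum>j\<in>{i<..n}. f i j) - (\<Sum>k<i. f k i))
          - u * ((\<Sum>j\<in>{i<..n}. p i j) - (\<Sum>k<i. p k i))) / (1 - u)"
    unfolding div by (simp add: diff_divide_distrib[symmetric] algebra_simps)
  also have "\<dots> = N i"
    using flow_polytope_outflow_eq[OF f i] flow_polytope_outflow_eq[OF p i] u
    by (simp add: field_simps)
  finally show "(\<Sum>j\<in>{i<..n}. (f i j - u * p i j) / (1 - u))
      - (\<Sum>k<i. (f k i - u * p k i) / (1 - u)) = N i" .
qed

lemma vertex_eq_if_dominates:
  assumes f: "f \<in> vertices (flow_polytope n N)" and p: "p \<in> flow_polytope n N"
    and u: "0 < u" "u < 1" and le: "\<And>i j. u * p i j \<le> f i j"
  shows "f = p"
proof -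
  define g where "g = (\<lambda>i j. (f i j - u * p i j) / (1 - u))"
  have g: "g \<in> flow_polytope n N"
    unfolding g_def using f u le by (intro flow_polytope_residual[OF _ p]) (auto simp: vertices_def)
  have f_comb: "f = (\<lambda>i j. u * p i j + (1 - u) * g i j)" using u by (auto simp: g_def)
  then have "p = g" using f p g u unfolding vertices_def by blast
  then show ?thesis using f_comb by (simp add: algebra_simps)
qed

lemma exists_positive_path:
  assumes f: "f \<in> flow_polytope n (source_sink n t)" and t: "0 < t"
    and "i \<le> n" and "i = 0 \<or> 0 < (\<Sum>k<i. f k i)"
  shows "\<exists>S \<subseteq> {i..n}. i \<in> S \<and> n \<in> S \<and> (\<forall>a b. consecutive S a b \<longrightarrow> 0 < f a b)"
  using assms(3,4)
proof (induction "n - i" arbitrary: i rule: less_induct)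
  case less
  show ?case
  proof (cases "i = n")
    case True
    then show ?thesis by (intro exI[of _ "{n}"]) (auto simp: consecutive_def)
  next
    case False
    have nonneg: "0 \<le> f a b" for a b using f unfolding flow_polytope_def by auto
    have "0 < source_sink n t i + (\<Sum>k<i. f k i)"
      using less.prems False t by (auto simp: source_sink_def)
    then have "0 < (\<Sum>j\<in>{i<..n}. f i j)" using flow_polytope_outflow_eq[OF f less.prems(1)] by simp
    then obtain j where j: "j \<in> {i<..n}" "0 < f i j" by (meson not_less sum_nonpos)
    have "f i j \<le> (\<Sum>k<j. f k j)"
      using j nonneg by (intro member_le_sum[where f = "\<lambda>k. f k j"]) auto
    moreover have "n - j < n - i" "j \<le> n" using j by auto
    ultimately obtain S where S: "S \<subseteq> {j..n}" "j \<in> S" "n \<in> S" "\<forall>a b. consecutive S a b \<longrightarrow> 0 < f a b"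
      using less.hyps[of j] j(2) by fastforce
    have "consecutive (insert i S) a b \<longleftrightarrow> (a = i \<and> b = j) \<or> consecutive S a b" for a b
      using j S by (intro consecutive_insert_below) auto
    then show ?thesis using S j less.prems by (intro exI[of _ "insert i S"]) auto
  qed
qed

lemma vertex_is_path_flow:
  assumes n: "1 \<le> n" and t: "0 < t" and v: "f \<in> vertices (flow_polytope n (source_sink n t))"
  obtains S where "S \<subseteq> {..n}" "0 \<in> S" "n \<in> S" "f = path_flow t S"
proof -
  have f: "f \<in> flow_polytope n (source_sink n t)" using v unfolding vertices_def by auto
  obtain S where S: "S \<subseteq> {..n}" "0 \<in> S" "n \<in> S" and pos: "\<forall>a b. consecutive S a b \<longrightarrow> 0 < f a b"
    using exists_positive_path[OF f t, of 0] by (auto simp: atLeast0AtMost)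
  define E where "E = {(a, b). consecutive S a b}"
  define m where "m = Min ((\<lambda>(a, b). f a b) ` E)"
  have "E \<subseteq> S \<times> S" unfolding E_def consecutive_def by auto
  then have E_fin: "finite E" using S by (meson finite_SigmaI finite_atMost finite_subset)
  have "finite S" using S(1) finite_subset by blast
  then obtain j where "consecutive S 0 j"
    by (rule consecutive_exists_succ[OF _ S(2,3)]) (use n in auto)
  then have "E \<noteq> {}" unfolding E_def by auto
  then have "0 < m" unfolding m_def using E_fin pos by (subst Min_gr_iff) (auto simp: E_def)
  have m_le: "m \<le> f a b" if "consecutive S a b" for a b
    unfolding m_def using E_fin that by (intro Min_le) (auto simp: E_def)
  define u where "u = min (1/2) (m / t)"
  have u: "0 < u" "u < 1" "u * t \<le> m"
    using \<open>0 < m\<close> t unfolding u_def by (auto simp: min_def field_simps)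
  have "u * path_flow t S a b \<le> f a b" for a b
  proof (cases "consecutive S a b")
    case True
    then show ?thesis using u m_le[OF True] by (simp add: path_flow_def)
  next
    case False
    then show ?thesis using f by (simp add: path_flow_def flow_polytope_def)
  qed
  then have "f = path_flow t S"
    using S n t by (intro vertex_eq_if_dominates[OF v _ u(1,2)] path_flow_in_flow_polytope) auto
  then show thesis using S that by blast
qed

definition path_flows :: "nat \<Rightarrow> real \<Rightarrow> (nat \<Rightarrow> nat \<Rightarrow> real) set" where
  "path_flows n t = (\<lambda>T. path_flow t (insert 0 (insert n T))) ` Pow {1..<n}"

lemma vertices_flow_polytope_source_sink:
  assumes "1 \<le> n" "0 < t"
  shows "vertices (flow_polytope n (source_sink n t)) = path_flows n t"
proof
  show "vertices (flow_polytope n (source_sink n t)) \<subseteq> path_flows n t"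
  proof
    fix f assume f: "f \<in> vertices (flow_polytope n (source_sink n t))"
    obtain S where S: "S \<subseteq> {..n}" "0 \<in> S" "n \<in> S" "f = path_flow t S"
      by (rule vertex_is_path_flow[OF assms f])
    have "insert 0 (insert n (S - {0, n})) = S" using S(2,3) by blast
    moreover have "S - {0, n} \<subseteq> {1..<n}" using S(1) by (auto simp: subset_eq)
    ultimately show "f \<in> path_flows n t"
      unfolding path_flows_def S(4) by (intro image_eqI[where x = "S - {0, n}"]) simp_all
  qed
  show "path_flows n t \<subseteq> vertices (flow_polytope n (source_sink n t))"
  proof
    fix f assume "f \<in> path_flows n t"
    then obtain T where T: "T \<subseteq> {1..<n}" "f = path_flow t (insert 0 (insert n T))"
      unfolding path_flows_def by blast
    have "insert 0 (insert n T) \<subseteq> {..n}" using T(1) by (auto simp: subset_eq)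
    then show "f \<in> vertices (flow_polytope n (source_sink n t))"
      unfolding T(2) using assms by (intro path_flow_in_vertices) auto
  qed
qed

lemma path_flow_determines_interior:
  assumes "t \<noteq> 0" "T \<subseteq> {1..<n}"
  shows "T = {k \<in> {1..<n}. \<exists>j. path_flow t (insert 0 (insert n T)) k j \<noteq> 0}"
proof (intro equalityI subsetI)
  fix k assume k: "k \<in> T"
  have "finite (insert 0 (insert n T))" using finite_subset[OF assms(2)] by simp
  then obtain j where "consecutive (insert 0 (insert n T)) k j"
    by (rule consecutive_exists_succ[of _ k n]) (use k assms(2) in auto)
  then show "k \<in> {k \<in> {1..<n}. \<exists>j. path_flow t (insert 0 (insert n T)) k j \<noteq> 0}"
    using k assms by (auto simp: path_flow_def)
next
  fix k assume "k \<in> {k \<in> {1..<n}. \<exists>j. path_flow t (insert 0 (insert n T)) k j \<noteq> 0}"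
  then obtain j where k: "k \<in> {1..<n}" and "consecutive (insert 0 (insert n T)) k j"
    by (auto simp: path_flow_def split: if_splits)
  then have "k \<in> insert 0 (insert n T)" unfolding consecutive_def by blast
  then show "k \<in> T" using k by auto
qed

lemma inj_on_path_flow:
  assumes "t \<noteq> 0"
  shows "inj_on (\<lambda>T. path_flow t (insert 0 (insert n T))) (Pow {1..<n})"
proof (rule inj_onI)
  fix T1 T2 assume T: "T1 \<in> Pow {1..<n}" "T2 \<in> Pow {1..<n}"
    and eq: "path_flow t (insert 0 (insert n T1)) = path_flow t (insert 0 (insert n T2))"
  show "T1 = T2"
    using path_flow_determines_interior[OF assms, of T1 n] path_flow_determines_interior[OF assms, of T2 n]
      T unfolding eq by simp
qed

lemma sum_path_flows:
  assumes "t \<noteq> 0"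
  shows "(\<Sum>v\<in>path_flows n t. g v) = (\<Sum>T\<in>Pow {1..<n}. g (path_flow t (insert 0 (insert n T))))"
  unfolding path_flows_def by (rule sum.reindex[OF inj_on_path_flow[OF assms], unfolded comp_def])

lemma card_path_flows:
  assumes "t \<noteq> 0"
  shows "card (path_flows n t) = 2 ^ (n - 1)"
  unfolding path_flows_def card_image[OF inj_on_path_flow[OF assms]] by (simp add: card_Pow)

lemma uniform_average_path_flows:
  assumes "t \<noteq> 0"
  shows "uniform_average (path_flows n t) i j =
    (if i < j \<and> j \<le> n then t * (1/2) ^ card ({i..j} \<inter> {1..<n}) else 0)"
proof -
  have avg: "uniform_average (path_flows n t) i j
      = (\<Sum>T\<in>Pow {1..<n}. path_flow t (insert 0 (insert n T)) i j) / 2 ^ card {1..<n}"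
    unfolding uniform_average_def sum_path_flows[OF assms] card_path_flows[OF assms] by simp
  show ?thesis
  proof (cases "i < j \<and> j \<le> n")
    case True
    then have "uniform_average (path_flows n t) i j
        = (\<Sum>T\<in>Pow {1..<n}. if T \<inter> ({i..j} \<inter> {1..<n}) = {i, j} \<inter> {1..<n} then t else 0)
          / 2 ^ card {1..<n}"
      unfolding avg path_flow_def by (intro arg_cong2[where f = "(/)"] sum.cong refl)
        (simp add: consecutive_insert_0_n_iff)
    also have "\<dots> = t * (1/2) ^ card ({i..j} \<inter> {1..<n})"
      using True by (intro sum_Pow_if_Int_eq) auto
    finally show ?thesis using True by simp
  next
    case False
    have "path_flow t (insert 0 (insert n T)) i j = 0" if "T \<subseteq> {1..<n}" for T
      using False that unfolding path_flow_def consecutive_def by (auto simp: subset_eq)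
    then have "(\<Sum>T\<in>Pow {1..<n}. path_flow t (insert 0 (insert n T)) i j) = 0"
      by (intro sum.neutral) auto
    then show ?thesis unfolding avg using False by auto
  qed
qed

lemma inflow_uniform_average_path_flows:
  assumes "t \<noteq> 0" "1 \<le> i" "i < n"
  shows "(\<Sum>k<i. uniform_average (path_flows n t) k i) = t / 2"
proof -
  have inflow: "(\<Sum>k<i. path_flow t (insert 0 (insert n T)) k i) = (if T \<inter> {i} = {i} then t else 0)"
    if "T \<subseteq> {1..<n}" for T
    using that assms by (subst path_flow_inflow[where n = n]) (auto simp: subset_eq)
  have "(\<Sum>k<i. uniform_average (path_flows n t) k i)
      = (\<Sum>T\<in>Pow {1..<n}. \<Sum>k<i. path_flow t (insert 0 (insert n T)) k i) / 2 ^ card {1..<n}"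
    unfolding uniform_average_def sum_divide_distrib[symmetric] sum.swap[of _ "{..<i}"]
    by (simp add: sum_path_flows[OF assms(1)] card_path_flows[OF assms(1)])
  also have "\<dots> = (\<Sum>T\<in>Pow {1..<n}. if T \<inter> {i} = {i} then t else 0) / 2 ^ card {1..<n}"
    using inflow by simp
  also have "\<dots> = t / 2" using assms by (subst sum_Pow_if_Int_eq) auto
  finally show ?thesis .
qed

theorem proposition4p2:
  fixes n :: nat and t :: real
  assumes "n \<ge> 2" and "t > 0"
  defines "N \<equiv> (\<lambda>i::nat. if i = 0 then t else if i = n then - t else 0)"
  defines "f \<equiv> (\<lambda>i k::nat.
      if i = 0 \<and> k = n then t * (1/2) ^ (n - 1)
      else if i = 0 \<and> 1 \<le> k \<and> k \<le> n - 1 then t * (1/2) ^ k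
      else if 1 \<le> i \<and> i \<le> n - 1 \<and> k = n then t * (1/2) ^ (n - i)
      else if 1 \<le> i \<and> i < k \<and> k \<le> n - 1 then t * (1/2) ^ (k - i + 1)
      else (0::real))"
  defines "A \<equiv> (\<lambda>i j::nat.
      if i < n \<and> j < n then
        (if i = 0 \<and> j = 0 then (1/2) ^ (n - 1)
         else if i = 0 then (1/2) ^ (n - j)
         else if j = 0 then (1/2) ^ (n - i)
         else if i + j < n then (1/2) ^ (n - i - j + 1)
         else if i + j = n then 1/2
         else 0)
      else (0::real))"
  shows "finite (vertices (flow_polytope n N)) \<and> vertices (flow_polytope n N) \<noteq> {}
    \<and> uniform_average (vertices (flow_polytope n N)) = f
    \<and> matrix_form n N f = (\<lambda>i j. t * A i j)"
proof -
  have n: "1 \<le> n" and t: "t \<noteq> 0" using assms(1,2) by auto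
  have V: "vertices (flow_polytope n N) = path_flows n t"
    unfolding N_def using n assms(2) vertices_flow_polytope_source_sink by (simp add: source_sink_def)
  have avg: "uniform_average (path_flows n t) = f"
    using n unfolding uniform_average_path_flows[OF t] card_Icc_Int_interior f_def
    by (intro ext) (auto simp: min_def max_def Suc_diff_le)
  have inflow: "(\<Sum>k<i. N k - f k i) = t / 2" if "1 \<le> i" "i \<le> n - 1" for i
  proof -
    have "(\<Sum>k<i. N k) = t" using that by (auto simp: N_def sum.If_cases lessThan_def)
    then show ?thesis
      using that inflow_uniform_average_path_flows[OF t, of i n] unfolding sum_subtractf avg by simp
  qed
  have "matrix_form n N f = (\<lambda>i j. t * A i j)"
  proof (intro ext)
    fix i j
    show "matrix_form n N f i j = t * A i j"
    proof (cases "i < n \<and> j < n \<and> i + j \<le> n - 1")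
      case True
      then show ?thesis unfolding matrix_form_def A_def f_def using n by (auto simp: algebra_simps)
    next
      case False
      then show ?thesis unfolding matrix_form_def using inflow[of i] by (auto simp: A_def)
    qed
  qed
  moreover have "finite (path_flows n t)" "path_flows n t \<noteq> {}" unfolding path_flows_def by auto
  ultimately show ?thesis unfolding V avg by blast
qed

end
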